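(* Let $S=\{1,\dots,n\}$, $C=\{1,\dots,m\}$, bandwidths $\mathcal{U}=(U_s)_{s\in S}$ with $U_s>0$, memory sizes $\mathcal{D}=(d_s)_{s\in S}$ with integers $d_s\ge1$, and popularities $\Lambda=(\lambda_c)_{c\in C}$ with $\lambda_c\ge 0$. Let $\mathtt{JAM}^*(\mathcal{U},\Lambda,\mathcal{D})$ denote the optimal value of \[ \max_{Z=(z_{sc})}\ \sum_{s\in S}\sum_{c\in C} z_{sc}\ \text{ s.t. } \sum_{c}z_{sc}\le U_s\ \forall s,\ \sum_{s}z_{sc}\le\lambda_c\ \forall c,\ \sum_{c}\mathbb{1}(z_{sc}>0)\le d_s\ \forall s,\ z_{sc}\ge 0. \] Consider the following \texttt{greedy} algorithm. Initialize $\mathsf{flow}(s)=U_s$, $\mathsf{deg}(s)=d_s$ for all $s\in S$, $\mathsf{flow}(c)=\lambda_c$ for all $c\in C$, and $z_{sc}=0$, $a_{sc}=0$ for all $(s,c)$. While there exists $(s,c)\in S\times C$ with $\mathsf{flow}(s)\,\mathsf{deg}(s)\,\mathsf{flow}(c)>0$: choose $s^*\in\arg\max_{s\in S:\mathsf{deg}(s)>0}\mathsf{flow}(s)$ and $c^*\in\arg\max_{c\in C}\mathsf{flow}(c)$ (ties broken arbitrarily), set $f=\min(\mathsf{flow}(s^* ),\mathsf{flow}(c^* ))$, decrease $\mathsf{flow}(s^* )$ and $\mathsf{flow}(c^* )$ by $f$, decrease $\mathsf{deg}(s^* )$ by $1$, and set $a_{s^*c^*}=1$, $z_{s^*c^*}=f$.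 The output value of the algorithm is the total matched flow $\sum_{s,c}z_{sc}$ (the sum of the values $f$ over all iterations). Then the output value of \texttt{greedy} on this instance is at least $\frac{1}{2}\mathtt{JAM}^*(\mathcal{U},\Lambda,\mathcal{D})$.
   Context: $\mathbb{1}(\cdot)$ denotes the indicator function. *)

theory Defs
  imports Complex_Main
begin

definition jam_feasible ::
  "nat \<Rightarrow> nat \<Rightarrow> (nat \<Rightarrow> real) \<Rightarrow> (nat \<Rightarrow> real) \<Rightarrow> (nat \<Rightarrow> nat)
    \<Rightarrow> (nat \<Rightarrow> nat \<Rightarrow> real) \<Rightarrow> bool" where
  "jam_feasible n m U lam d Z \<longleftrightarrow>
     (\<forall>s\<in>{1..n}. (\<Sum>c\<in>{1..m}. Z s c) \<le> U s) \<and>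
     (\<forall>c\<in>{1..m}. (\<Sum>s\<in>{1..n}. Z s c) \<le> lam c) \<and>
     (\<forall>s\<in>{1..n}. (\<Sum>c\<in>{1..m}. (if Z s c > 0 then 1 else 0 :: nat)) \<le> d s) \<and>
     (\<forall>s\<in>{1..n}. \<forall>c\<in>{1..m}. Z s c \<ge> 0)"

definition jam_obj :: "nat \<Rightarrow> nat \<Rightarrow> (nat \<Rightarrow> nat \<Rightarrow> real) \<Rightarrow> real" where
  "jam_obj n m Z = (\<Sum>s\<in>{1..n}. \<Sum>c\<in>{1..m}. Z s c)"

text \<open>Optimal value JAM*(U, Lambda, D) (the supremum, which is attained).\<close>
definition JAM_opt ::
  "nat \<Rightarrow> nat \<Rightarrow> (nat \<Rightarrow> real) \<Rightarrow> (nat \<Rightarrow> real) \<Rightarrow> (nat \<Rightarrow> nat) \<Rightarrow> real" where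
  "JAM_opt n m U lam d = Sup {jam_obj n m Z | Z. jam_feasible n m U lam d Z}"

text \<open>Greedy state: (flow on servers, remaining degree of servers, flow on contents,
  total matched flow so far = sum of the values f over all iterations).\<close>
type_synonym greedy_state = "(nat \<Rightarrow> real) \<times> (nat \<Rightarrow> nat) \<times> (nat \<Rightarrow> real) \<times> real"

definition greedy_loop_cond :: "nat \<Rightarrow> nat \<Rightarrow> greedy_state \<Rightarrow> bool" where
  "greedy_loop_cond n m st = (case st of (fS, dg, fC, tot) \<Rightarrow>
     (\<exists>s\<in>{1..n}. \<exists>c\<in>{1..m}. fS s * real (dg s) * fC c > 0))"

text \<open>One iteration of the while loop, with arbitrary tie breaking (nondeterministic).\<close>
definition greedy_step :: "nat \<Rightarrow> nat \<Rightarrow> greedy_state \<Rightarrow> greedy_state \<Rightarrow> bool" where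
  "greedy_step n m st st' = (case st of (fS, dg, fC, tot) \<Rightarrow>
     greedy_loop_cond n m st \<and>
     (\<exists>s' c' f. s' \<in> {1..n} \<and> dg s' > 0 \<and>
        (\<forall>s\<in>{1..n}. dg s > 0 \<longrightarrow> fS s \<le> fS s') \<and>
        c' \<in> {1..m} \<and> (\<forall>c\<in>{1..m}. fC c \<le> fC c') \<and>
        f = min (fS s') (fC c') \<and>
        st' = (fS(s' := fS s' - f), dg(s' := dg s' - 1), fC(c' := fC c' - f), tot + f)))"

definition greedy_init :: "(nat \<Rightarrow> real) \<Rightarrow> (nat \<Rightarrow> real) \<Rightarrow> (nat \<Rightarrow> nat) \<Rightarrow> greedy_state" where
  "greedy_init U lam d = (U, d, lam, 0)"

end

theory Submission
  imports Defs
begin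

text \<open>Let B s = U s - fS s be the flow served by server s. Whenever greedy picks a server, it
  pairs it with a content of maximal residual popularity; if the server keeps spare bandwidth,
  that content is exhausted, so this matching served at least the residual popularity of every
  content (how the server was chosen is irrelevant). Hence at termination a server with spare
  bandwidth satisfies d s * fC c \<le> B s for every content c, since either its memory is full or
  all contents are exhausted. Now split an optimal allocation: a saturated server carries at
  most U s = B s; on a content c the unsaturated servers carry at most lam c, i.e. the flow
  lam c - fC c greedy routed to c plus fC c, and charging this fC c to one of them costs each
  unsaturated server at most d s * fC c \<le> B s in total.\<close>

lemma sum_le_if_card_le_and_scaled_le:
  fixes a :: "'a \<Rightarrow> real"
  assumes "finite A" "card A \<le> k" "\<forall>x\<in>A. real k * a x \<le> B" "0 \<le> B"
  shows "sum a A \<le> B"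
proof (cases "k = 0")
  case True
  then show ?thesis using assms by simp
next
  case False
  have "real k * sum a A = (\<Sum>x\<in>A. real k * a x)"
    by (simp add: sum_distrib_left)
  also have "\<dots> \<le> real (card A) * B"
    using sum_bounded_above[of A "\<lambda>x. real k * a x" B] assms(3) by simp
  also have "\<dots> \<le> real k * B"
    using assms(2,4) by (simp add: mult_right_mono)
  finally show ?thesis
    using False by simp
qed

lemma jam_obj_le_residuals:
  assumes feas: "jam_feasible n m U lam d Z"
    and fS: "\<forall>s\<in>{1..n}. 0 \<le> fS s \<and> fS s \<le> U s"
    and fC: "\<forall>c\<in>{1..m}. 0 \<le> fC c \<and> fC c \<le> lam c"
    and exhausted: "\<forall>s\<in>{1..n}. 0 < fS s \<longrightarrow> (\<forall>c\<in>{1..m}. real (d s) * fC c \<le> U s - fS s)"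
  shows "jam_obj n m Z \<le> (\<Sum>s\<in>{1..n}. U s - fS s) + (\<Sum>c\<in>{1..m}. lam c - fC c)"
proof -
  have Z_server: "\<forall>s\<in>{1..n}. (\<Sum>c\<in>{1..m}. Z s c) \<le> U s"
    and Z_content: "\<forall>c\<in>{1..m}. (\<Sum>s\<in>{1..n}. Z s c) \<le> lam c"
    and Z_memory: "\<forall>s\<in>{1..n}. (\<Sum>c\<in>{1..m}. (if Z s c > 0 then 1 else 0 :: nat)) \<le> d s"
    and Z_nonneg: "\<forall>s\<in>{1..n}. \<forall>c\<in>{1..m}. 0 \<le> Z s c"
    using feas unfolding jam_feasible_def by auto
  define P where "P = {s\<in>{1..n}. 0 < fS s}"
  define Q where "Q = {s\<in>{1..n}. \<not> 0 < fS s}"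
  define g where "g s c = (if 0 < Z s c then fC c else 0)" for s c
  have PQ: "{1..n} = P \<union> Q" "P \<inter> Q = {}" "finite P" "finite Q" "P \<subseteq> {1..n}"
    unfolding P_def Q_def by auto
  have saturated: "(\<Sum>c\<in>{1..m}. Z s c) \<le> U s - fS s" if "s \<in> Q" for s
    using that Z_server fS unfolding Q_def by force
  have per_content: "(\<Sum>s\<in>P. Z s c) \<le> (lam c - fC c) + (\<Sum>s\<in>P. g s c)"
    if c: "c \<in> {1..m}" for c
  proof (cases "\<exists>s\<in>P. 0 < Z s c")
    case True
    then obtain s0 where s0: "s0 \<in> P" "0 < Z s0 c" by blast
    have "(\<Sum>s\<in>P. Z s c) \<le> (\<Sum>s\<in>{1..n}. Z s c)"
      using PQ c Z_nonneg by (intro sum_mono2) auto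
    also have "\<dots> \<le> (lam c - fC c) + g s0 c"
      using Z_content c s0 unfolding g_def by simp
    also have "g s0 c \<le> (\<Sum>s\<in>P. g s c)"
      using s0 PQ fC c unfolding g_def by (intro member_le_sum) auto
    finally show ?thesis by simp
  next
    case False
    then have "(\<Sum>s\<in>P. Z s c) \<le> 0"
      by (intro sum_nonpos) auto
    moreover have "0 \<le> (\<Sum>s\<in>P. g s c)"
      using fC c unfolding g_def by (intro sum_nonneg) auto
    moreover have "fC c \<le> lam c"
      using fC c by blast
    ultimately show ?thesis
      by linarith
  qed
  have per_server: "(\<Sum>c\<in>{1..m}. g s c) \<le> U s - fS s" if s: "s \<in> P" for s
  proof -
    let ?A = "{c\<in>{1..m}. 0 < Z s c}"
    have "(\<Sum>c\<in>{1..m}. g s c) = sum fC ?A"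
      unfolding g_def by (rule sum.inter_filter[symmetric]) simp
    also have "\<dots> \<le> U s - fS s"
    proof (rule sum_le_if_card_le_and_scaled_le)
      have "card ?A = (\<Sum>c\<in>{1..m}. (if Z s c > 0 then 1 else 0 :: nat))"
        unfolding card_eq_sum by (rule sum.inter_filter) simp
      then show "card ?A \<le> d s"
        using Z_memory s PQ by auto
      show "\<forall>c\<in>?A. real (d s) * fC c \<le> U s - fS s"
        using exhausted s unfolding P_def by auto
      show "0 \<le> U s - fS s"
        using fS s unfolding P_def by auto
    qed simp
    finally show ?thesis .
  qed
  have "(\<Sum>c\<in>{1..m}. \<Sum>s\<in>P. Z s c) \<le> (\<Sum>c\<in>{1..m}. (lam c - fC c) + (\<Sum>s\<in>P. g s c))"
    by (rule sum_mono) (rule per_content)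
  also have "\<dots> = (\<Sum>c\<in>{1..m}. lam c - fC c) + (\<Sum>s\<in>P. \<Sum>c\<in>{1..m}. g s c)"
    by (simp add: sum.distrib sum.swap[of g])
  also have "\<dots> \<le> (\<Sum>c\<in>{1..m}. lam c - fC c) + (\<Sum>s\<in>P. U s - fS s)"
    using per_server by (simp add: sum_mono)
  finally have unsaturated:
    "(\<Sum>c\<in>{1..m}. \<Sum>s\<in>P. Z s c) \<le> (\<Sum>c\<in>{1..m}. lam c - fC c) + (\<Sum>s\<in>P. U s - fS s)" .
  have "jam_obj n m Z = (\<Sum>s\<in>Q. \<Sum>c\<in>{1..m}. Z s c) + (\<Sum>c\<in>{1..m}. \<Sum>s\<in>P. Z s c)"
    unfolding jam_obj_def PQ(1) using PQ by (simp add: sum.union_disjoint sum.swap[of _ P])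
  also have "\<dots> \<le> (\<Sum>s\<in>Q. U s - fS s) + ((\<Sum>c\<in>{1..m}. lam c - fC c) + (\<Sum>s\<in>P. U s - fS s))"
    using saturated unsaturated by (intro add_mono sum_mono) auto
  also have "\<dots> = (\<Sum>s\<in>{1..n}. U s - fS s) + (\<Sum>c\<in>{1..m}. lam c - fC c)"
    unfolding PQ(1) using PQ by (simp add: sum.union_disjoint)
  finally show ?thesis .
qed

lemma sum_diff_fun_upd_minus:
  fixes g :: "'a \<Rightarrow> real"
  assumes "finite A" "i \<in> A"
  shows "(\<Sum>x\<in>A. h x - (g(i := g i - f)) x) = (\<Sum>x\<in>A. h x - g x) + f"
proof -
  have "(\<Sum>x\<in>A. h x - (g(i := g i - f)) x) = (\<Sum>x\<in>A. (h x - g x) + (if x = i then f else 0))"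
    by (rule sum.cong) auto
  then show ?thesis
    using assms by (simp add: sum.distrib)
qed

text \<open>In the third conjunct, each of the d s - dg s matchings of a server that still has spare
  bandwidth exhausted a content of then maximal residual popularity.\<close>

definition greedy_inv ::
  "nat \<Rightarrow> nat \<Rightarrow> (nat \<Rightarrow> real) \<Rightarrow> (nat \<Rightarrow> real) \<Rightarrow> (nat \<Rightarrow> nat) \<Rightarrow> greedy_state \<Rightarrow> bool" where
  "greedy_inv n m U lam d st \<longleftrightarrow> (case st of (fS, dg, fC, tot) \<Rightarrow>
     (\<forall>s\<in>{1..n}. 0 \<le> fS s \<and> fS s \<le> U s \<and> dg s \<le> d s) \<and>
     (\<forall>c\<in>{1..m}. 0 \<le> fC c \<and> fC c \<le> lam c) \<and>
     (\<forall>s\<in>{1..n}. 0 < fS s \<longrightarrow> (\<forall>c\<in>{1..m}. real (d s - dg s) * fC c \<le> U s - fS s)) \<and>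
     tot = (\<Sum>s\<in>{1..n}. U s - fS s) \<and>
     tot = (\<Sum>c\<in>{1..m}. lam c - fC c))"

lemma greedy_inv_init:
  assumes "\<forall>s\<in>{1..n}. 0 \<le> U s" "\<forall>c\<in>{1..m}. 0 \<le> lam c"
  shows "greedy_inv n m U lam d (greedy_init U lam d)"
  using assms unfolding greedy_inv_def greedy_init_def by auto

lemma greedy_inv_step:
  assumes step: "greedy_step n m st st'" and inv: "greedy_inv n m U lam d st"
  shows "greedy_inv n m U lam d st'"
proof -
  obtain fS dg fC tot where st: "st = (fS, dg, fC, tot)"
    by (cases st)
  obtain s' c' where s': "s' \<in> {1..n}" "0 < dg s'"
    and c': "c' \<in> {1..m}" "\<forall>c\<in>{1..m}. fC c \<le> fC c'"
    and st': "st' = (fS(s' := fS s' - min (fS s') (fC c')), dg(s' := dg s' - 1),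
                     fC(c' := fC c' - min (fS s') (fC c')), tot + min (fS s') (fC c'))"
    using step unfolding st greedy_step_def by auto
  define f where "f = min (fS s') (fC c')"
  define fS' where "fS' = fS(s' := fS s' - f)"
  define dg' where "dg' = dg(s' := dg s' - 1)"
  define fC' where "fC' = fC(c' := fC c' - f)"
  have ranges: "\<forall>s\<in>{1..n}. 0 \<le> fS s \<and> fS s \<le> U s \<and> dg s \<le> d s"
      "\<forall>c\<in>{1..m}. 0 \<le> fC c \<and> fC c \<le> lam c"
    and served: "\<forall>s\<in>{1..n}. 0 < fS s \<longrightarrow> (\<forall>c\<in>{1..m}. real (d s - dg s) * fC c \<le> U s - fS s)"
    and totals: "tot = (\<Sum>s\<in>{1..n}. U s - fS s)" "tot = (\<Sum>c\<in>{1..m}. lam c - fC c)"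
    using inv unfolding st greedy_inv_def by auto
  have f: "0 \<le> f" "f \<le> fS s'" "f \<le> fC c'"
    using ranges s' c' unfolding f_def by auto
  have fC'_le_max: "fC' c \<le> fC c'" if "c \<in> {1..m}" for c
    using c' that f unfolding fC'_def by auto
  have served': "real (d s - dg' s) * fC' c \<le> U s - fS' s"
    if s: "s \<in> {1..n}" and c: "c \<in> {1..m}" and spare: "0 < fS' s" for s c
  proof (cases "s = s'")
    case True
    have exhausted: "f = fC c'" and "0 < fS s'"
      using spare True f unfolding fS'_def f_def by auto
    have "dg s' \<le> d s'"
      using s' ranges by blast
    then have "real (d s - dg' s) = real (d s' - dg s') + 1"
      using True s' unfolding dg'_def by (simp add: Suc_diff_le)
    then have "real (d s - dg' s) * fC' c \<le> (real (d s' - dg s') + 1) * fC c'"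
      using fC'_le_max[OF c] by (simp add: mult_left_mono)
    also have "\<dots> \<le> U s' - fS s' + f"
      using served s' c' \<open>0 < fS s'\<close> exhausted by (simp add: algebra_simps)
    finally show ?thesis
      using True unfolding fS'_def by simp
  next
    case False
    have "fC' c \<le> fC c"
      using f unfolding fC'_def by simp
    then have "real (d s - dg' s) * fC' c \<le> real (d s - dg s) * fC c"
      using False unfolding dg'_def by (simp add: mult_left_mono)
    also have "\<dots> \<le> U s - fS' s"
      using served s c spare False unfolding fS'_def by simp
    finally show ?thesis .
  qed
  have "greedy_inv n m U lam d (fS', dg', fC', tot + f)"
    unfolding greedy_inv_def prod.case
  proof (intro conjI)
    show "\<forall>s\<in>{1..n}. 0 \<le> fS' s \<and> fS' s \<le> U s \<and> dg' s \<le> d s"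
      using ranges f unfolding fS'_def dg'_def by (auto simp del: atLeastAtMost_iff)
    show "\<forall>c\<in>{1..m}. 0 \<le> fC' c \<and> fC' c \<le> lam c"
      using ranges f unfolding fC'_def by (auto simp del: atLeastAtMost_iff)
    show "\<forall>s\<in>{1..n}. 0 < fS' s \<longrightarrow> (\<forall>c\<in>{1..m}. real (d s - dg' s) * fC' c \<le> U s - fS' s)"
      using served' by blast
    show "tot + f = (\<Sum>s\<in>{1..n}. U s - fS' s)" "tot + f = (\<Sum>c\<in>{1..m}. lam c - fC' c)"
      using totals sum_diff_fun_upd_minus[OF _ s'(1), of U fS f]
        sum_diff_fun_upd_minus[OF _ c'(1), of lam fC f]
      unfolding fS'_def fC'_def by simp_all
  qed
  then show ?thesis
    unfolding st' fS'_def dg'_def fC'_def f_def .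
qed

lemma greedy_inv_reachable:
  assumes "(greedy_step n m)\<^sup>*\<^sup>* st0 st" "greedy_inv n m U lam d st0"
  shows "greedy_inv n m U lam d st"
  using assms by (induction rule: rtranclp_induct) (auto intro: greedy_inv_step)

lemma greedy_terminated_server_bound:
  assumes inv: "greedy_inv n m U lam d (fS, dg, fC, out)"
    and stop: "\<not> greedy_loop_cond n m (fS, dg, fC, out)"
  shows "\<forall>s\<in>{1..n}. 0 < fS s \<longrightarrow> (\<forall>c\<in>{1..m}. real (d s) * fC c \<le> U s - fS s)"
proof (intro ballI impI)
  fix s c assume s: "s \<in> {1..n}" and spare: "0 < fS s" and c: "c \<in> {1..m}"
  have ranges: "0 \<le> fC c" "fS s \<le> U s"
    and served: "real (d s - dg s) * fC c \<le> U s - fS s"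
    using inv s c spare unfolding greedy_inv_def by auto
  show "real (d s) * fC c \<le> U s - fS s"
  proof (cases "fC c = 0")
    case False
    then have "0 < fC c"
      using ranges by simp
    then have "\<not> 0 < fS s * real (dg s) * fC c"
      using stop s c unfolding greedy_loop_cond_def by auto
    then have "dg s = 0"
      using spare \<open>0 < fC c\<close> by (auto simp: zero_less_mult_iff)
    then show ?thesis
      using served by simp
  qed (use ranges in simp)
qed

lemma JAM_opt_le:
  assumes "\<forall>s\<in>{1..n}. 0 \<le> U s" "\<forall>c\<in>{1..m}. 0 \<le> lam c"
    and bound: "\<And>Z. jam_feasible n m U lam d Z \<Longrightarrow> jam_obj n m Z \<le> b"
  shows "JAM_opt n m U lam d \<le> b"
proof -
  have "jam_feasible n m U lam d (\<lambda>s c. 0)"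
    using assms(1,2) unfolding jam_feasible_def by (auto intro: sum_nonneg)
  then have "{jam_obj n m Z | Z. jam_feasible n m U lam d Z} \<noteq> {}"
    by blast
  then show ?thesis
    unfolding JAM_opt_def using bound by (auto intro: cSup_least)
qed

theorem theorem2:
  fixes n m :: nat and U lam :: "nat \<Rightarrow> real" and d :: "nat \<Rightarrow> nat"
    and fS :: "nat \<Rightarrow> real" and dg :: "nat \<Rightarrow> nat" and fC :: "nat \<Rightarrow> real" and out :: real
  assumes "\<forall>s\<in>{1..n}. U s > 0"
    and "\<forall>s\<in>{1..n}. d s \<ge> 1"
    and "\<forall>c\<in>{1..m}. lam c \<ge> 0"
    and "(greedy_step n m)\<^sup>*\<^sup>* (greedy_init U lam d) (fS, dg, fC, out)"
    and "\<not> greedy_loop_cond n m (fS, dg, fC, out)"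
  shows "out \<ge> JAM_opt n m U lam d / 2"
proof -
  have U_nonneg: "\<forall>s\<in>{1..n}. 0 \<le> U s"
    using assms(1) by (simp add: less_imp_le)
  have inv: "greedy_inv n m U lam d (fS, dg, fC, out)"
    using greedy_inv_reachable[OF assms(4) greedy_inv_init[OF U_nonneg assms(3)]] .
  have exhausted: "\<forall>s\<in>{1..n}. 0 < fS s \<longrightarrow> (\<forall>c\<in>{1..m}. real (d s) * fC c \<le> U s - fS s)"
    using greedy_terminated_server_bound[OF inv assms(5)] .
  have "JAM_opt n m U lam d \<le> out + out"
  proof (rule JAM_opt_le[OF U_nonneg assms(3)])
    fix Z assume "jam_feasible n m U lam d Z"
    from jam_obj_le_residuals[OF this _ _ exhausted] inv
    show "jam_obj n m Z \<le> out + out"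
      unfolding greedy_inv_def by auto
  qed
  then show ?thesis
    by simp
qed

end
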